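(* Let $\Pi$ be an online subadditive coverage problem and $p\in[0,1]$. If there exists an $\alpha(p)$-competitive monotone algorithm for $\Pi$ in the $p$-sample independent model, then there exists an $\alpha(p)$-competitive algorithm for $\Pi$ in the $(\frac12,p)$-sample MRF model.
   Context: Subadditive coverage problem: $V$ is a set of demand points and $E$ a ground set of elements; for each $D \subseteq V$ there is a family $\mathcal{F}_D \subseteq 2^E$ of feasible solutions such that (a) $S_1\in\mathcal{F}_{D_1}$, $S_2\in\mathcal{F}_{D_2}$ imply $S_1\cup S_2\in\mathcal{F}_{D_1\cup D_2}$, and (b) $D_1\subseteq D_2$ implies $\mathcal{F}_{D_2}\subseteq\mathcal{F}_{D_1}$. The cost $c:2^E\to\mathbb{R}_{\ge0}$ is monotone and subadditive; $\mathrm{OPT}(D)=\min_{S\in\mathcal{F}_D}c(S)$. Online: demands arrive one at a time, and after each arrival the algorithm irrevocably adds elements so that its current set is feasible for all demands so far. $p$-sample independent model: an adversary chooses an unknown value set $V=\{v_1,\dots,v_n\}$; a sample $S\subseteq V$, containing each $v_i$ independently with known probability $p$, is revealed upfront; $R=V\setminus S$ arrive as demands in adversarial order. An algorithm is $\alpha(p)$-competitive if its expected cost is at most $\alpha(p)\cdot\mathrm{OPT}(V)$. It is monotone if it remains $\alpha(p)$-competitive when the sample set is augmented by moving some (possibly adversarially chosen) real values into it, i.e. the sample is any $S\supseteq S'$ with $S'$ containing each $v_i$ independently with probability $p$, and the demand set is $V\setminus S$. $(\frac12,p)$-sample MRF model: an adversary chooses an unknown value set $V=\{v_1,\dots,v_n\}$;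 a random sample $S\subseteq V$ is revealed upfront, where $(\mathbf{1}[v_i\in S])_{i\in[n]}$ has an unknown MRF distribution over $\{0,1\}^n$ (a distribution with $\Pr[x]\propto\exp(\sum_i\psi_i(x_i)+\sum_e\psi_e(x_e))$ for a hypergraph and potentials) such that for each $i$: $\Pr[v_i\in S]\ge1/2$, and $\Pr[v_i\in S\mid\text{membership of all }v_{i'},i'\neq i]\ge p$ for every conditioning. The values $V\setminus S$ arrive in adversarial order as demands. Competitiveness is measured against $\mathrm{OPT}(V)$ as in the $p$-sample model. *)

theory Defs
  imports "HOL-Probability.Probability"
begin

text \<open>Subadditive coverage problem on demand points of type 'v and ground elements of
  type 'e (ground set E = UNIV).  F D is the family of feasible solutions for the demand
  set D, c the cost function.\<close>
definition subadditive_coverage :: "('v set \<Rightarrow> 'e set set) \<Rightarrow> ('e set \<Rightarrow> real) \<Rightarrow> bool" where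
  "subadditive_coverage F c \<longleftrightarrow>
     (\<forall>D1 D2 S1 S2. S1 \<in> F D1 \<longrightarrow> S2 \<in> F D2 \<longrightarrow> S1 \<union> S2 \<in> F (D1 \<union> D2)) \<and>
     (\<forall>D1 D2. D1 \<subseteq> D2 \<longrightarrow> F D2 \<subseteq> F D1) \<and>
     (\<forall>S. 0 \<le> c S) \<and>
     (\<forall>A B. A \<subseteq> B \<longrightarrow> c A \<le> c B) \<and>
     (\<forall>A B. c (A \<union> B) \<le> c A + c B)"

definition OPT :: "('v set \<Rightarrow> 'e set set) \<Rightarrow> ('e set \<Rightarrow> real) \<Rightarrow> 'v set \<Rightarrow> real" where
  "OPT F c D = Inf (c ` F D)"

text \<open>A deterministic online algorithm maps the revealed sample S and the list of demands
  that have arrived so far to its current solution.\<close>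
type_synonym ('v, 'e) det_alg = "'v set \<Rightarrow> 'v list \<Rightarrow> 'e set"

definition valid_run :: "('v set \<Rightarrow> 'e set set) \<Rightarrow> ('v, 'e) det_alg \<Rightarrow> 'v set \<Rightarrow> 'v list \<Rightarrow> bool" where
  "valid_run F A S xs \<longleftrightarrow>
     (\<forall>k \<in> {1..length xs}. A S (take k xs) \<in> F (set (take k xs))) \<and>
     (\<forall>k < length xs. A S (take k xs) \<subseteq> A S (take (Suc k) xs))"

text \<open>Randomized online algorithm = distribution over deterministic ones (independent
  of the sample).  An adversary maps the drawn sample to (revealed sample, arrival order).
  Expected final cost:\<close>
definition expected_cost ::
  "('e set \<Rightarrow> real) \<Rightarrow> 'v set pmf \<Rightarrow> ('v, 'e) det_alg pmf \<Rightarrow> ('v set \<Rightarrow> 'v set \<times> 'v list) \<Rightarrow> ennreal" where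
  "expected_cost c \<mu> alg adv =
     (\<integral>\<^sup>+ S. (\<integral>\<^sup>+ A. ennreal (c (A (fst (adv S)) (snd (adv S)))) \<partial>measure_pmf alg) \<partial>measure_pmf \<mu>)"

definition valid_on ::
  "('v set \<Rightarrow> 'e set set) \<Rightarrow> 'v set pmf \<Rightarrow> ('v, 'e) det_alg pmf \<Rightarrow> ('v set \<Rightarrow> 'v set \<times> 'v list) \<Rightarrow> bool" where
  "valid_on F \<mu> alg adv \<longleftrightarrow>
     (\<forall>S \<in> set_pmf \<mu>. \<forall>A \<in> set_pmf alg. valid_run F A (fst (adv S)) (snd (adv S)))"

definition indep_sample :: "real \<Rightarrow> 'v set \<Rightarrow> 'v set pmf \<Rightarrow> bool" where
  "indep_sample p V \<mu> \<longleftrightarrow>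
     (\<forall>S. pmf \<mu> S = (if S \<subseteq> V then (\<Prod>v\<in>V. if v \<in> S then p else 1 - p) else 0))"

text \<open>Markov random field distribution of the sample on value set V: node potentials psi,
  a hypergraph H on V with hyperedge potentials phi (phi e depends only on S \<inter> e).\<close>
definition MRF_weight :: "'v set \<Rightarrow> ('v \<Rightarrow> bool \<Rightarrow> real) \<Rightarrow> 'v set set \<Rightarrow> ('v set \<Rightarrow> 'v set \<Rightarrow> real) \<Rightarrow> 'v set \<Rightarrow> real" where
  "MRF_weight V psi H phi S = exp ((\<Sum>v\<in>V. psi v (v \<in> S)) + (\<Sum>e\<in>H. phi e (S \<inter> e)))"

definition is_MRF :: "'v set \<Rightarrow> 'v set pmf \<Rightarrow> bool" where
  "is_MRF V \<mu> \<longleftrightarrow>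
     (\<exists>psi H phi. H \<subseteq> Pow V \<and>
        (\<forall>S. pmf \<mu> S = (if S \<subseteq> V then MRF_weight V psi H phi S / (\<Sum>T\<in>Pow V. MRF_weight V psi H phi T)
                          else 0)))"

definition half_p_MRF :: "real \<Rightarrow> 'v set \<Rightarrow> 'v set pmf \<Rightarrow> bool" where
  "half_p_MRF p V \<mu> \<longleftrightarrow> is_MRF V \<mu> \<and>
     (\<forall>v\<in>V. measure_pmf.prob \<mu> {S. v \<in> S} \<ge> 1/2) \<and>
     (\<forall>v\<in>V. \<forall>T \<subseteq> V - {v}.
        measure_pmf.prob \<mu> {S. v \<in> S \<and> S - {v} = T} / measure_pmf.prob \<mu> {S. S - {v} = T} \<ge> p)"

definition listing :: "'v list \<Rightarrow> 'v set \<Rightarrow> bool" where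
  "listing xs A \<longleftrightarrow> distinct xs \<and> set xs = A"

definition feasible_instance :: "('v set \<Rightarrow> 'e set set) \<Rightarrow> 'v set \<Rightarrow> bool" where
  "feasible_instance F V \<longleftrightarrow> finite V \<and> F V \<noteq> {}"

text \<open>alpha-competitive monotone algorithm in the p-sample independent model: the adversary
  may augment the independent sample S' to any S with S' \<subseteq> S \<subseteq> V (chosen depending on S'),
  and orders the demands V - S arbitrarily.\<close>
definition monotone_competitive_indep ::
  "('v set \<Rightarrow> 'e set set) \<Rightarrow> ('e set \<Rightarrow> real) \<Rightarrow> real \<Rightarrow> real \<Rightarrow> ('v, 'e) det_alg pmf \<Rightarrow> bool" where
  "monotone_competitive_indep F c p \<alpha> alg \<longleftrightarrow>
     (\<forall>V \<mu> adv. feasible_instance F V \<longrightarrow> indep_sample p V \<mu> \<longrightarrow>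
        (\<forall>S' \<subseteq> V. S' \<subseteq> fst (adv S') \<and> fst (adv S') \<subseteq> V \<and> listing (snd (adv S')) (V - fst (adv S'))) \<longrightarrow>
        valid_on F \<mu> alg adv \<and> expected_cost c \<mu> alg adv \<le> ennreal (\<alpha> * OPT F c V))"

definition competitive_MRF ::
  "('v set \<Rightarrow> 'e set set) \<Rightarrow> ('e set \<Rightarrow> real) \<Rightarrow> real \<Rightarrow> real \<Rightarrow> ('v, 'e) det_alg pmf \<Rightarrow> bool" where
  "competitive_MRF F c p \<alpha> alg \<longleftrightarrow>
     (\<forall>V \<mu> \<sigma>. feasible_instance F V \<longrightarrow> half_p_MRF p V \<mu> \<longrightarrow>
        (\<forall>S. listing (\<sigma> S) (V - S)) \<longrightarrow>
        valid_on F \<mu> alg (\<lambda>S. (S, \<sigma> S)) \<and>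
        expected_cost c \<mu> alg (\<lambda>S. (S, \<sigma> S)) \<le> ennreal (\<alpha> * OPT F c V))"

end

theory Submission
  imports Defs
begin

text \<open>Conditioned on all other memberships, every v lies in the MRF sample with probability
  at least p.  Peeling off one element at a time, this makes every antitone function of the
  sample have expectation under the MRF distribution at most its expectation under the
  independent p-sample.  Let h S be the expected cost of the monotone algorithm when S is
  revealed, and H S' the maximum of h over the supersets of S'.  Then H is antitone, and it is
  the cost against the augmenting adversary that moves S' to a maximizing superset, so
  E_MRF[h] \<le> E_MRF[H] \<le> E_indep[H] \<le> \<alpha> OPT.  Feasibility transfers because the
  independent sample is empty with positive probability (an MRF gives every sample positive
  weight, which forces p < 1), and augmenting the empty sample to S reproduces the run on S.\<close>

definition indep_weight :: "real \<Rightarrow> 'v set \<Rightarrow> 'v set \<Rightarrow> real" where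
  "indep_weight p V S = (\<Prod>v\<in>V. if v \<in> S then p else 1 - p)"

lemma indep_weight_insert:
  assumes "finite V" "v \<notin> V" "T \<subseteq> V"
  shows "indep_weight p (insert v V) T = (1 - p) * indep_weight p V T"
    and "indep_weight p (insert v V) (insert v T) = p * indep_weight p V T"
proof -
  have "(\<Prod>u\<in>V. if u \<in> insert v T then p else 1 - p) = (\<Prod>u\<in>V. if u \<in> T then p else 1 - p)"
    using assms by (intro prod.cong) auto
  then show "indep_weight p (insert v V) (insert v T) = p * indep_weight p V T"
    using assms unfolding indep_weight_def by simp
  show "indep_weight p (insert v V) T = (1 - p) * indep_weight p V T"
    using assms unfolding indep_weight_def by (auto simp: subset_iff)
qed

lemma sum_Pow_insert:
  assumes "finite V" "v \<notin> V"
  shows "(\<Sum>T\<in>Pow (insert v V). f T) = (\<Sum>T\<in>Pow V. f T + f (insert v T))"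
proof -
  have "inj_on (insert v) (Pow V)"
    using assms(2) by (auto simp: inj_on_def)
  moreover have "Pow V \<inter> insert v ` Pow V = {}"
    using assms(2) by auto
  ultimately show ?thesis
    unfolding Pow_insert using assms(1) by (simp add: sum.union_disjoint sum.reindex sum.distrib)
qed

lemma sum_indep_weight_insert:
  assumes "finite V" "v \<notin> V"
  shows "(\<Sum>T\<in>Pow (insert v V). indep_weight p (insert v V) T * H T)
       = (\<Sum>T\<in>Pow V. indep_weight p V T * ((1 - p) * H T + p * H (insert v T)))"
proof -
  have "(\<Sum>T\<in>Pow (insert v V). indep_weight p (insert v V) T * H T)
      = (\<Sum>T\<in>Pow V. indep_weight p (insert v V) T * H T
                      + indep_weight p (insert v V) (insert v T) * H (insert v T))"
    using assms by (rule sum_Pow_insert)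
  also have "\<dots> = (\<Sum>T\<in>Pow V. indep_weight p V T * ((1 - p) * H T + p * H (insert v T)))"
    using assms by (intro sum.cong) (auto simp: indep_weight_insert algebra_simps)
  finally show ?thesis .
qed

text \<open>Pr[v \<in> S | S - {v} = T] \<ge> p for the weights w, with the denominator cleared so that
  conditioning on a null event imposes nothing.\<close>
definition conditional_inclusion_ge :: "real \<Rightarrow> 'v set \<Rightarrow> ('v set \<Rightarrow> real) \<Rightarrow> bool" where
  "conditional_inclusion_ge p V w \<longleftrightarrow>
     (\<forall>v\<in>V. \<forall>T\<subseteq>V - {v}. p * (w T + w (insert v T)) \<le> w (insert v T))"

lemma conditional_inclusion_ge_marginal:
  assumes "conditional_inclusion_ge p (insert v V) w" "v \<notin> V"
  shows "conditional_inclusion_ge p V (\<lambda>T. w T + w (insert v T))"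
  unfolding conditional_inclusion_ge_def
proof (intro ballI allI impI)
  fix u T assume u: "u \<in> V" and T: "T \<subseteq> V - {u}"
  have cond: "\<forall>u\<in>insert v V. \<forall>T\<subseteq>insert v V - {u}. p * (w T + w (insert u T)) \<le> w (insert u T)"
    using assms(1) unfolding conditional_inclusion_ge_def .
  have "u \<in> insert v V" "T \<subseteq> insert v V - {u}" "insert v T \<subseteq> insert v V - {u}"
    using u T assms(2) by auto
  then have "p * (w T + w (insert u T)) \<le> w (insert u T)"
    and "p * (w (insert v T) + w (insert u (insert v T))) \<le> w (insert u (insert v T))"
    using cond by simp_all
  moreover have "insert u (insert v T) = insert v (insert u T)" by auto
  ultimately show "p * (w T + w (insert v T) + (w (insert u T) + w (insert v (insert u T))))
      \<le> w (insert u T) + w (insert v (insert u T))"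
    by (simp add: algebra_simps)
qed

lemma conditional_inclusion_ge_imp_less_one:
  assumes "conditional_inclusion_ge p V w" "v \<in> V" "0 < w {}" "0 \<le> w {v}"
  shows "p < 1"
proof (rule ccontr)
  assume "\<not> p < 1"
  then have "w {} + w {v} \<le> p * (w {} + w {v})"
    using assms(3,4) by (simp add: mult_le_cancel_right1)
  moreover have "p * (w {} + w {v}) \<le> w {v}"
    using assms(1,2) unfolding conditional_inclusion_ge_def by fastforce
  ultimately show False
    using assms(3) by simp
qed

lemma two_point_dominance:
  fixes p a b x y :: real
  assumes "p * (a + b) \<le> b" "y \<le> x"
  shows "a * x + b * y \<le> (a + b) * ((1 - p) * x + p * y)"
proof -
  have "0 \<le> (x - y) * (b - p * (a + b))"
    using assms by simp
  then show ?thesis by (simp add: algebra_simps)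
qed

lemma antimono_on_insert_average:
  fixes H :: "'v set \<Rightarrow> real"
  assumes "antimono_on (Pow (insert v V)) H" "0 \<le> p" "p \<le> 1"
  shows "antimono_on (Pow V) (\<lambda>T. (1 - p) * H T + p * H (insert v T))"
proof (rule monotone_onI)
  fix S S' assume "S \<in> Pow V" "S' \<in> Pow V" "S \<subseteq> S'"
  then have "H S' \<le> H S" "H (insert v S') \<le> H (insert v S)"
    using assms(1) by (auto elim!: monotone_onD)
  then show "(1 - p) * H S' + p * H (insert v S') \<le> (1 - p) * H S + p * H (insert v S)"
    using assms(2,3) by (intro add_mono mult_left_mono) auto
qed

lemma sum_antimono_le_indep_weight:
  assumes "finite V" "conditional_inclusion_ge p V w" "antimono_on (Pow V) H" "0 \<le> p" "p \<le> 1"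
  shows "(\<Sum>T\<in>Pow V. w T * H T) \<le> (\<Sum>T\<in>Pow V. w T) * (\<Sum>T\<in>Pow V. indep_weight p V T * H T)"
  using assms(1-3)
proof (induction V arbitrary: w H rule: finite_induct)
  case empty
  then show ?case by (simp add: indep_weight_def)
next
  case (insert v V)
  define m where "m T = w T + w (insert v T)" for T
  define G where "G T = (1 - p) * H T + p * H (insert v T)" for T
  have "antimono_on (Pow V) G"
    unfolding G_def using insert.prems(2) assms(4,5) by (rule antimono_on_insert_average)
  moreover have "conditional_inclusion_ge p V m"
    unfolding m_def using insert.prems(1) insert.hyps(2) by (rule conditional_inclusion_ge_marginal)
  ultimately have IH: "(\<Sum>T\<in>Pow V. m T * G T)
      \<le> (\<Sum>T\<in>Pow V. m T) * (\<Sum>T\<in>Pow V. indep_weight p V T * G T)"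
    using insert.IH by blast
  have "(\<Sum>T\<in>Pow (insert v V). w T * H T)
      = (\<Sum>T\<in>Pow V. w T * H T + w (insert v T) * H (insert v T))"
    using insert.hyps by (rule sum_Pow_insert)
  also have "\<dots> \<le> (\<Sum>T\<in>Pow V. m T * G T)"
  proof (rule sum_mono)
    fix T assume T: "T \<in> Pow V"
    have "p * (w T + w (insert v T)) \<le> w (insert v T)"
      using insert.prems(1) insert.hyps(2) T unfolding conditional_inclusion_ge_def by auto
    moreover have "H (insert v T) \<le> H T"
      using insert.prems(2) T by (auto elim!: monotone_onD)
    ultimately show "w T * H T + w (insert v T) * H (insert v T) \<le> m T * G T"
      unfolding m_def G_def by (rule two_point_dominance)
  qed
  also have "\<dots> \<le> (\<Sum>T\<in>Pow V. m T) * (\<Sum>T\<in>Pow V. indep_weight p V T * G T)"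
    by (rule IH)
  also have "\<dots> = (\<Sum>T\<in>Pow (insert v V). w T)
                  * (\<Sum>T\<in>Pow (insert v V). indep_weight p (insert v V) T * H T)"
    unfolding m_def G_def sum_Pow_insert[OF insert.hyps, of w] sum_indep_weight_insert[OF insert.hyps] ..
  finally show ?case .
qed

definition indep_pmf :: "real \<Rightarrow> 'v set \<Rightarrow> 'v set pmf" where
  "indep_pmf p V = map_pmf Collect (Pi_pmf V False (\<lambda>_. bernoulli_pmf p))"

lemma pmf_indep_pmf:
  assumes "finite V" "0 \<le> p" "p \<le> 1"
  shows "pmf (indep_pmf p V) S = (if S \<subseteq> V then indep_weight p V S else 0)"
proof -
  have "inj Collect"
    by (auto intro: injI Collect_inj)
  then have "pmf (indep_pmf p V) S = pmf (Pi_pmf V False (\<lambda>_. bernoulli_pmf p)) (\<lambda>v. v \<in> S)"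
    unfolding indep_pmf_def by (metis Collect_mem_eq pmf_map_inj')
  also have "\<dots> = (if S \<subseteq> V then indep_weight p V S else 0)"
    using assms by (auto simp: pmf_Pi indep_weight_def intro!: prod.cong)
  finally show ?thesis .
qed

lemma indep_sample_indep_pmf:
  assumes "finite V" "0 \<le> p" "p \<le> 1"
  shows "indep_sample p V (indep_pmf p V)"
  using assms by (simp add: indep_sample_def pmf_indep_pmf indep_weight_def)

lemma set_pmf_subset_Pow_if_indep_sample:
  assumes "indep_sample p V \<nu>"
  shows "set_pmf \<nu> \<subseteq> Pow V"
  using assms by (auto simp: indep_sample_def set_pmf_iff split: if_splits)

lemma empty_in_set_pmf_if_indep_sample:
  assumes "indep_sample p V \<nu>" "finite V" "p < 1 \<or> V = {}"
  shows "{} \<in> set_pmf \<nu>"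
  using assms by (auto simp: indep_sample_def set_pmf_iff)

lemma nn_integral_pmf_Pow:
  fixes H :: "'v set \<Rightarrow> ennreal"
  assumes "finite V" "set_pmf \<mu> \<subseteq> Pow V" "\<And>S. S \<subseteq> V \<Longrightarrow> H S = ennreal (h S)" "\<And>S. 0 \<le> h S"
  shows "(\<integral>\<^sup>+S. H S \<partial>\<mu>) = ennreal (\<Sum>S\<in>Pow V. pmf \<mu> S * h S)"
proof -
  have "(\<integral>\<^sup>+S. H S \<partial>\<mu>) = (\<Sum>S\<in>Pow V. H S * pmf \<mu> S)"
    using assms(1,2) by (intro nn_integral_measure_pmf_support) auto
  also have "\<dots> = (\<Sum>S\<in>Pow V. ennreal (pmf \<mu> S * h S))"
    using assms(3,4) by (intro sum.cong) (auto simp: ennreal_mult mult.commute)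
  finally show ?thesis
    using assms(4) by simp
qed

lemma nn_integral_antimono_le_indep_sample:
  fixes H :: "'v set \<Rightarrow> ennreal"
  assumes "finite V" "set_pmf \<mu> \<subseteq> Pow V" "conditional_inclusion_ge p V (pmf \<mu>)"
    and "indep_sample p V \<nu>" "antimono_on (Pow V) H" "H {} \<noteq> \<top>" "0 \<le> p" "p \<le> 1"
  shows "(\<integral>\<^sup>+S. H S \<partial>\<mu>) \<le> (\<integral>\<^sup>+S. H S \<partial>\<nu>)"
proof -
  define h where "h S = enn2real (H S)" for S
  have "H S \<le> H {}" if "S \<subseteq> V" for S
    using monotone_onD[OF assms(5), of "{}" S] that by simp
  then have H_finite: "H S < \<top>" if "S \<subseteq> V" for S
    using assms(6) that by (metis order.strict_trans1 top.not_eq_extremum)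
  then have H_eq: "H S = ennreal (h S)" if "S \<subseteq> V" for S
    using that by (simp add: h_def)
  have h_nonneg: "0 \<le> h S" for S
    by (simp add: h_def)
  have "antimono_on (Pow V) h"
    using assms(5) H_finite by (auto intro!: monotone_onI enn2real_mono elim!: monotone_onD simp: h_def)
  then have "(\<Sum>S\<in>Pow V. pmf \<mu> S * h S)
      \<le> (\<Sum>S\<in>Pow V. pmf \<mu> S) * (\<Sum>S\<in>Pow V. indep_weight p V S * h S)"
    by (rule sum_antimono_le_indep_weight[OF assms(1,3) _ assms(7,8)])
  also have "(\<Sum>S\<in>Pow V. pmf \<mu> S) = 1"
    using assms(1,2) by (intro sum_pmf_eq_1) auto
  also have "(\<Sum>S\<in>Pow V. indep_weight p V S * h S) = (\<Sum>S\<in>Pow V. pmf \<nu> S * h S)"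
    using assms(4) by (intro sum.cong) (auto simp: indep_sample_def indep_weight_def)
  finally have "(\<Sum>S\<in>Pow V. pmf \<mu> S * h S) \<le> (\<Sum>S\<in>Pow V. pmf \<nu> S * h S)"
    by simp
  moreover have "(\<integral>\<^sup>+S. H S \<partial>\<mu>) = ennreal (\<Sum>S\<in>Pow V. pmf \<mu> S * h S)"
    using assms(1,2) H_eq h_nonneg by (rule nn_integral_pmf_Pow)
  moreover have "(\<integral>\<^sup>+S. H S \<partial>\<nu>) = ennreal (\<Sum>S\<in>Pow V. pmf \<nu> S * h S)"
    using assms(1) set_pmf_subset_Pow_if_indep_sample[OF assms(4)] H_eq h_nonneg
    by (rule nn_integral_pmf_Pow)
  ultimately show ?thesis
    by (simp add: ennreal_leI)
qed

definition max_superset :: "'v set \<Rightarrow> ('v set \<Rightarrow> 'a::linorder) \<Rightarrow> 'v set \<Rightarrow> 'a" where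
  "max_superset V h S' = Max (h ` {S. S' \<subseteq> S \<and> S \<subseteq> V})"

lemma max_superset_ge:
  assumes "finite V" "S \<subseteq> V"
  shows "h S \<le> max_superset V h S"
  unfolding max_superset_def using assms by (intro Max_ge) auto

lemma max_superset_attained:
  assumes "finite V" "S' \<subseteq> V"
  shows "\<exists>S. S' \<subseteq> S \<and> S \<subseteq> V \<and> h S = max_superset V h S'"
proof -
  have "max_superset V h S' \<in> h ` {S. S' \<subseteq> S \<and> S \<subseteq> V}"
    unfolding max_superset_def using assms by (intro Max_in) auto
  then obtain S where "S \<in> {S. S' \<subseteq> S \<and> S \<subseteq> V}" "max_superset V h S' = h S"
    by (rule imageE)
  then show ?thesis by auto
qed

lemma antimono_max_superset:
  assumes "finite V"
  shows "antimono_on (Pow V) (max_superset V h)"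
proof (rule monotone_onI)
  fix S S' assume "S \<in> Pow V" "S' \<in> Pow V" "S \<subseteq> S'"
  then show "max_superset V h S' \<le> max_superset V h S"
    unfolding max_superset_def using assms by (intro Max_mono) auto
qed

lemma pmf_mult_le_nn_integral:
  "ennreal (pmf M x) * f x \<le> (\<integral>\<^sup>+y. f y \<partial>measure_pmf M)"
proof -
  have "ennreal (pmf M x) * f x = (\<integral>\<^sup>+y. f y * indicator {x} y \<partial>measure_pmf M)"
    by (simp add: emeasure_pmf_single mult.commute)
  also have "\<dots> \<le> (\<integral>\<^sup>+y. f y \<partial>measure_pmf M)"
    by (intro nn_integral_mono) (simp split: split_indicator)
  finally show ?thesis .
qed

definition sample_cost ::
  "('e set \<Rightarrow> real) \<Rightarrow> ('v, 'e) det_alg pmf \<Rightarrow> ('v set \<Rightarrow> 'v list) \<Rightarrow> 'v set \<Rightarrow> ennreal" where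
  "sample_cost c alg \<sigma> S = (\<integral>\<^sup>+A. ennreal (c (A S (\<sigma> S))) \<partial>measure_pmf alg)"

lemma expected_cost_eq_sample_cost:
  "expected_cost c \<mu> alg (\<lambda>S. (g S, \<sigma> (g S))) = (\<integral>\<^sup>+S. sample_cost c alg \<sigma> (g S) \<partial>measure_pmf \<mu>)"
  by (simp add: expected_cost_def sample_cost_def)

lemma valid_on_if_monotone_competitive_indep:
  assumes "monotone_competitive_indep F c p \<alpha> alg" "feasible_instance F V"
    and "indep_sample p V \<nu>" "{} \<in> set_pmf \<nu>" "set_pmf \<mu> \<subseteq> Pow V" "\<forall>S. listing (\<sigma> S) (V - S)"
  shows "valid_on F \<mu> alg (\<lambda>S. (S, \<sigma> S))"
  unfolding valid_on_def
proof (intro ballI)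
  fix S A assume S: "S \<in> set_pmf \<mu>" and A: "A \<in> set_pmf alg"
  have "valid_on F \<nu> alg (\<lambda>S'. (S \<union> S', \<sigma> (S \<union> S')))"
    using assms(1-3,5,6) S unfolding monotone_competitive_indep_def by auto
  then show "valid_run F A (fst (S, \<sigma> S)) (snd (S, \<sigma> S))"
    using assms(4) A unfolding valid_on_def by fastforce
qed

lemma expected_cost_le_if_monotone_competitive_indep:
  assumes "monotone_competitive_indep F c p \<alpha> alg" "feasible_instance F V"
    and "indep_sample p V \<nu>" "{} \<in> set_pmf \<nu>" "set_pmf \<mu> \<subseteq> Pow V"
    and "conditional_inclusion_ge p V (pmf \<mu>)" "0 \<le> p" "p \<le> 1" "\<forall>S. listing (\<sigma> S) (V - S)"
  shows "expected_cost c \<mu> alg (\<lambda>S. (S, \<sigma> S)) \<le> ennreal (\<alpha> * OPT F c V)"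
proof -
  have V: "finite V"
    using assms(2) by (simp add: feasible_instance_def)
  define h where "h = sample_cost c alg \<sigma>"
  define H where "H = max_superset V h"
  have "\<exists>S. S' \<subseteq> V \<longrightarrow> S' \<subseteq> S \<and> S \<subseteq> V \<and> h S = H S'" for S'
  proof (cases "S' \<subseteq> V")
    case True
    then show ?thesis
      using max_superset_attained[OF V True, of h] unfolding H_def by blast
  qed simp
  then obtain g where g: "\<And>S'. S' \<subseteq> V \<Longrightarrow> S' \<subseteq> g S' \<and> g S' \<subseteq> V \<and> h (g S') = H S'"
    by metis
  have "\<forall>S'\<subseteq>V. S' \<subseteq> g S' \<and> g S' \<subseteq> V \<and> listing (\<sigma> (g S')) (V - g S')"
    using g assms(9) by blast
  then have "expected_cost c \<nu> alg (\<lambda>S'. (g S', \<sigma> (g S'))) \<le> ennreal (\<alpha> * OPT F c V)"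
    using assms(1)[unfolded monotone_competitive_indep_def, rule_format, OF assms(2,3)] by simp
  moreover have "expected_cost c \<nu> alg (\<lambda>S'. (g S', \<sigma> (g S'))) = (\<integral>\<^sup>+S. H S \<partial>\<nu>)"
    unfolding expected_cost_eq_sample_cost h_def[symmetric]
    using g set_pmf_subset_Pow_if_indep_sample[OF assms(3)]
    by (intro nn_integral_cong_AE AE_pmfI) auto
  ultimately have H_bound: "(\<integral>\<^sup>+S. H S \<partial>\<nu>) \<le> ennreal (\<alpha> * OPT F c V)"
    by simp
  have "H {} \<noteq> \<top>"
  proof
    assume "H {} = \<top>"
    then have "ennreal (pmf \<nu> {}) * H {} = \<top>"
      using assms(4) by (simp add: set_pmf_iff ennreal_mult_eq_top_iff)
    then show False
      using pmf_mult_le_nn_integral[of \<nu> "{}" H] H_bound by (simp add: top_unique)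
  qed
  have "expected_cost c \<mu> alg (\<lambda>S. (S, \<sigma> S)) = (\<integral>\<^sup>+S. h S \<partial>\<mu>)"
    using expected_cost_eq_sample_cost[where g = id] by (simp add: h_def)
  also have "\<dots> \<le> (\<integral>\<^sup>+S. H S \<partial>\<mu>)"
    unfolding H_def using assms(5) max_superset_ge[OF V, of _ h]
    by (intro nn_integral_mono_AE AE_pmfI) auto
  also have "\<dots> \<le> (\<integral>\<^sup>+S. H S \<partial>\<nu>)"
    using V assms(5,6,3) antimono_max_superset[OF V] \<open>H {} \<noteq> \<top>\<close> assms(7,8)
    unfolding H_def by (rule nn_integral_antimono_le_indep_sample)
  also have "\<dots> \<le> ennreal (\<alpha> * OPT F c V)"
    by (rule H_bound)
  finally show ?thesis .
qed

lemma set_pmf_subset_Pow_if_MRF: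
  assumes "is_MRF V \<mu>"
  shows "set_pmf \<mu> \<subseteq> Pow V"
  using assms by (auto simp: is_MRF_def set_pmf_iff split: if_splits)

lemma pmf_pos_if_MRF:
  assumes "is_MRF V \<mu>" "finite V" "S \<subseteq> V"
  shows "0 < pmf \<mu> S"
proof -
  obtain psi H phi where \<mu>: "\<forall>S. pmf \<mu> S = (if S \<subseteq> V
      then MRF_weight V psi H phi S / (\<Sum>T\<in>Pow V. MRF_weight V psi H phi T) else 0)"
    using assms(1) unfolding is_MRF_def by blast
  have "0 < (\<Sum>T\<in>Pow V. MRF_weight V psi H phi T)"
    using assms(2) by (intro sum_pos) (auto simp: MRF_weight_def)
  then show ?thesis
    using \<mu> assms(3) by (simp add: MRF_weight_def)
qed

lemma conditional_inclusion_ge_if_half_p_MRF: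
  assumes "half_p_MRF p V \<mu>"
  shows "conditional_inclusion_ge p V (pmf \<mu>)"
  unfolding conditional_inclusion_ge_def
proof (intro ballI allI impI)
  fix v T assume v: "v \<in> V" and T: "T \<subseteq> V - {v}"
  then have "{S. v \<in> S \<and> S - {v} = T} = {insert v T}" "{S. S - {v} = T} = {T, insert v T}"
    and "T \<noteq> insert v T"
    by auto
  then have "measure_pmf.prob \<mu> {S. v \<in> S \<and> S - {v} = T} = pmf \<mu> (insert v T)"
    and "measure_pmf.prob \<mu> {S. S - {v} = T} = pmf \<mu> T + pmf \<mu> (insert v T)"
    by (simp_all add: measure_pmf_single measure_measure_pmf_finite)
  moreover have "p \<le> measure_pmf.prob \<mu> {S. v \<in> S \<and> S - {v} = T} / measure_pmf.prob \<mu> {S. S - {v} = T}"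
    using assms v T unfolding half_p_MRF_def by simp
  ultimately have "p \<le> pmf \<mu> (insert v T) / (pmf \<mu> T + pmf \<mu> (insert v T))"
    by simp
  moreover have "0 \<le> pmf \<mu> T + pmf \<mu> (insert v T)"
    by simp
  ultimately show "p * (pmf \<mu> T + pmf \<mu> (insert v T)) \<le> pmf \<mu> (insert v T)"
    by (cases "pmf \<mu> T + pmf \<mu> (insert v T) = 0") (simp_all add: le_divide_eq)
qed

lemma less_one_if_half_p_MRF:
  assumes "half_p_MRF p V \<mu>" "finite V" "v \<in> V"
  shows "p < 1"
proof -
  have "is_MRF V \<mu>"
    using assms(1) by (simp add: half_p_MRF_def)
  then show ?thesis
    using conditional_inclusion_ge_if_half_p_MRF[OF assms(1)] assms(2,3) pmf_pos_if_MRF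
    by (intro conditional_inclusion_ge_imp_less_one[where w = "pmf \<mu>" and v = v]) auto
qed

theorem lemma3p10:
  fixes F :: "'v set \<Rightarrow> 'e set set" and c :: "'e set \<Rightarrow> real" and p \<alpha> :: real
  assumes "subadditive_coverage F c"
    and "0 \<le> p" and "p \<le> 1"
    and "\<exists>alg. monotone_competitive_indep F c p \<alpha> alg"
  shows "\<exists>alg. competitive_MRF F c p \<alpha> alg"
proof -
  obtain alg where alg: "monotone_competitive_indep F c p \<alpha> alg"
    using assms(4) by blast
  have "competitive_MRF F c p \<alpha> alg"
    unfolding competitive_MRF_def
  proof (intro allI impI conjI)
    fix V \<mu> \<sigma>
    assume V: "feasible_instance F V" and \<mu>: "half_p_MRF p V \<mu>" and \<sigma>: "\<forall>S. listing (\<sigma> S) (V - S)"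
    have "finite V"
      using V by (simp add: feasible_instance_def)
    have support: "set_pmf \<mu> \<subseteq> Pow V"
      using \<mu> by (simp add: half_p_MRF_def set_pmf_subset_Pow_if_MRF)
    have "p < 1 \<or> V = {}"
      using less_one_if_half_p_MRF[OF \<mu> \<open>finite V\<close>] by blast
    then have \<nu>: "indep_sample p V (indep_pmf p V)" "{} \<in> set_pmf (indep_pmf p V)"
      using indep_sample_indep_pmf[OF \<open>finite V\<close> assms(2,3)] empty_in_set_pmf_if_indep_sample \<open>finite V\<close>
      by blast+
    show "valid_on F \<mu> alg (\<lambda>S. (S, \<sigma> S))"
      by (rule valid_on_if_monotone_competitive_indep[OF alg V \<nu> support \<sigma>])
    show "expected_cost c \<mu> alg (\<lambda>S. (S, \<sigma> S)) \<le> ennreal (\<alpha> * OPT F c V)"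
      by (rule expected_cost_le_if_monotone_competitive_indep[OF alg V \<nu> support
            conditional_inclusion_ge_if_half_p_MRF[OF \<mu>] assms(2,3) \<sigma>])
  qed
  then show ?thesis by blast
qed

end
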